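(* There is an absolute constant $C$ such that for every $0<\gamma<\frac1{15}$ there is $Q_0(\gamma)$ with the following property: for all $\zeta_1,\zeta_2\in[-1,1]$ and every integer $Q\ge Q_0(\gamma)$ there exist an integer $1\le q\le Q$ and $a=(a_1,a_2)\in\mathbb{Z}^2$ with $$\max_{j=1,2}\Big|\zeta_j-\frac{a_j}{q}\Big|\le\frac{C}{q^{1/2}Q^{\frac12+\gamma}}.$$ *)

theory Defs
  imports Complex_Main
begin

end

theory Submission
  imports Defs "HOL-Analysis.Kronecker_Approximation_Theorem"
begin

text \<open>
  Dirichlet's theorem gives \<open>q\<^sub>1 \<le> Q\<close> whose error vector \<open>t = q\<^sub>1\<zeta> - p\<close> has sup-norm
  below \<open>2/\<surd>Q\<close>. If \<open>t\<close> is already smaller than the target \<open>4\<surd>q\<^sub>1 / (\<surd>Q Q\<^sup>\<gamma>)\<close> we are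
  done. Otherwise, with \<open>|t\<^sub>2| \<le> |t\<^sub>1|\<close> say, we walk along the multiples \<open>k t\<close>: a
  one-dimensional Dirichlet approximation \<open>b/m\<close> of the slope \<open>t\<^sub>2/t\<^sub>1\<close> with \<open>m \<le> M \<approx> Q^(1/4 + \<gamma>)\<close>
  and \<open>k \<approx> m/|t\<^sub>1|\<close> bring \<open>k t\<close> within about \<open>1/M\<close> of a lattice point. The lower bound
  on \<open>|t\<^sub>1|\<close> keeps \<open>q = k q\<^sub>1\<close> below \<open>Q\<close>, while \<open>k \<ge> 1/(2|t\<^sub>1|) > \<surd>Q/4\<close> makes
  \<open>\<surd>q\<close> large enough for the error \<open>2/M\<close> to meet the target.
\<close>

lemma multiple_close_to_lattice_point:
  fixes t1 t2 :: real and M :: nat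
  assumes "M > 0" and t1: "0 < t1" "t1 \<le> 1" and t2: "\<bar>t2\<bar> \<le> t1"
  obtains k b1 b2 :: int
  where "1 / (2 * t1) \<le> k" "k \<le> M / t1 + 1/2"
    "\<bar>k * t1 - b1\<bar> \<le> t1 / 2" "\<bar>k * t2 - b2\<bar> \<le> t1 / 2 + 1 / M"
proof -
  define r where "r = t2 / t1"
  have r: "\<bar>r\<bar> \<le> 1"
    using t1 t2 by (simp add: r_def abs_divide divide_le_eq_1)
  obtain b2 m :: int where m: "0 < m" "m \<le> int M" and mr: "\<bar>m * r - b2\<bar> < 1 / M"
    using Dirichlet_approx[OF \<open>M > 0\<close>] by blast
  define k where "k = \<lfloor>m / t1 + 1/2\<rfloor>"
  have k: "m / t1 - 1/2 < k" "k \<le> m / t1 + 1/2"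
    unfolding k_def by linarith+
  have "m - t1 / 2 < k * t1" "k * t1 \<le> m + t1 / 2"
    using k t1(1) by (simp_all add: field_simps)
  then have kt1: "\<bar>k * t1 - m\<bar> \<le> t1 / 2"
    by linarith
  have "1 / t1 \<le> m / t1" "m / t1 \<le> M / t1"
    using m t1 by (simp_all add: divide_right_mono)
  moreover have "1 / (2 * t1) \<le> 1 / t1 - 1/2"
    using t1 by (simp add: field_simps)
  ultimately have k_bounds: "1 / (2 * t1) \<le> k" "k \<le> M / t1 + 1/2"
    using k by linarith+
  \<comment> \<open>k t2 = r (k t1), and k t1 is close to m, whose multiple m r is close to b2.\<close>
  have "k * t2 - b2 = r * (k * t1 - m) + (m * r - b2)"
    using t1 by (simp add: r_def field_simps)
  then have "\<bar>k * t2 - b2\<bar> \<le> \<bar>r\<bar> * \<bar>k * t1 - m\<bar> + \<bar>m * r - b2\<bar>"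
    by (metis abs_mult abs_triangle_ineq)
  also have "\<dots> \<le> 1 * (t1 / 2) + 1 / M"
    using r kt1 mr by (intro add_mono mult_mono) auto
  finally have "\<bar>k * t2 - b2\<bar> \<le> t1 / 2 + 1 / M"
    by simp
  with k_bounds kt1 show thesis
    using that by blast
qed

lemma multiple_close_to_lattice_point_abs:
  fixes t1 t2 :: real and M :: nat
  assumes "M > 0" and "0 < \<bar>t1\<bar>" "\<bar>t1\<bar> \<le> 1" "\<bar>t2\<bar> \<le> \<bar>t1\<bar>"
  obtains k b1 b2 :: int
  where "1 / (2 * \<bar>t1\<bar>) \<le> k" "k \<le> M / \<bar>t1\<bar> + 1/2"
    "\<bar>k * t1 - b1\<bar> \<le> \<bar>t1\<bar> / 2" "\<bar>k * t2 - b2\<bar> \<le> \<bar>t1\<bar> / 2 + 1 / M"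
proof (cases "t1 > 0")
  case True
  then show thesis
    using multiple_close_to_lattice_point[of M t1 t2] that assms by auto
next
  case False
  then have "\<bar>t1\<bar> = - t1"
    by simp
  then obtain k b1 b2 :: int
    where "1 / (2 * \<bar>t1\<bar>) \<le> k" "k \<le> M / \<bar>t1\<bar> + 1/2"
      "\<bar>k * (- t1) - b1\<bar> \<le> \<bar>t1\<bar> / 2" "\<bar>k * (- t2) - b2\<bar> \<le> \<bar>t1\<bar> / 2 + 1 / M"
    using multiple_close_to_lattice_point[of M "- t1" "- t2"] assms by auto
  then show thesis
    using that[of k "- b1" "- b2"] by (simp add: abs_minus_commute add.commute)
qed

lemma le_of_cube_le:
  fixes P w :: real
  assumes "1 \<le> P" "P ^ 3 \<le> w"
  shows "P \<le> w"
  using power_increasing[of 1 3 P] assms by simp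

lemma multiple_denominator_le:
  fixes w P t :: real and k q1 :: int and M :: nat
  assumes P: "1 \<le> P" "P ^ 3 \<le> w" and q1: "1 \<le> q1" and t: "0 < t"
    and large: "4 * sqrt q1 / (w\<^sup>2 * P) < t" and small: "t < 2 / w\<^sup>2"
    and M: "M \<le> 2 * (w * P)" and k: "k \<le> M / t + 1/2"
  shows "k * q1 \<le> w ^ 4"
proof -
  have Pw: "P \<le> w"
    using le_of_cube_le[OF P] .
  have w2: "0 < w\<^sup>2"
    using P(1) Pw by simp
  have sqrt_q1: "sqrt q1 < t * w\<^sup>2 * P / 4"
    using large w2 P(1) by (simp add: field_simps)
  also have "\<dots> < P / 2"
    using small w2 P(1) by (simp add: field_simps)
  finally have "sqrt q1 < P / 2" .
  have "q1 / t = sqrt q1 * (sqrt q1 / t)"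
    using q1 by simp
  also have "\<dots> \<le> (P / 2) * (w\<^sup>2 * P / 4)"
    using \<open>sqrt q1 < P / 2\<close> sqrt_q1 t q1 P(1) by (intro mult_mono) (auto simp: field_simps)
  finally have q1_t: "q1 / t \<le> w\<^sup>2 * P\<^sup>2 / 8"
    by (simp add: power2_eq_square mult_ac)
  have "k * q1 \<le> (M / t + 1/2) * q1"
    using k q1 by (simp add: mult_right_mono)
  also have "\<dots> = M * (q1 / t) + q1 / 2"
    by (simp add: field_simps)
  also have "\<dots> \<le> (2 * (w * P)) * (w\<^sup>2 * P\<^sup>2 / 8) + q1 / 2"
    using M q1_t t q1 by (intro add_mono mult_mono) auto
  also have "\<dots> = w ^ 3 * P ^ 3 / 4 + q1 / 2"
    by (simp add: power2_eq_square power3_eq_cube)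
  also have "\<dots> \<le> w ^ 4"
  proof -
    have "w ^ 3 * P ^ 3 \<le> w ^ 3 * w"
      using P Pw by (intro mult_left_mono) auto
    also have "\<dots> = w ^ 4"
      by (simp add: power3_eq_cube power4_eq_xxxx)
    finally have "w ^ 3 * P ^ 3 \<le> w ^ 4" .
    moreover have "sqrt q1 \<le> w"
      using \<open>sqrt q1 < P / 2\<close> Pw P(1) by linarith
    then have "q1 \<le> w\<^sup>2"
      using power_mono[OF \<open>sqrt q1 \<le> w\<close>, of 2] q1 by simp
    moreover have "w\<^sup>2 \<le> w ^ 4"
      using Pw P(1) by (intro power_increasing) auto
    ultimately show ?thesis
      using w2 by linarith
  qed
  finally show ?thesis
    by simp
qed

lemma sqrt_multiple_lower_bound:
  fixes w t :: real and k q1 :: int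
  assumes t: "0 < t" "t < 2 / w\<^sup>2" and k: "1 / (2 * t) \<le> k" and q1: "1 \<le> q1"
  shows "1 \<le> k" "\<bar>w\<bar> / 2 \<le> sqrt (k * q1)"
proof -
  have "w\<^sup>2 / 4 < 1 / (2 * t)"
    using t by (cases "w = 0") (simp_all add: field_simps)
  then have k_large: "w\<^sup>2 / 4 < k"
    using k by linarith
  moreover have "0 \<le> w\<^sup>2 / 4"
    by simp
  ultimately have "0 < k"
    by linarith
  then show "1 \<le> k"
    by simp
  then have "k \<le> k * q1"
    using q1 by (simp add: mult_le_cancel_left1)
  have "\<bar>w\<bar> / 2 = sqrt (w\<^sup>2 / 4)"
    by (simp add: real_sqrt_divide)
  also have "\<dots> \<le> sqrt (k * q1)"
    using k_large \<open>k \<le> k * q1\<close> by (simp add: real_sqrt_le_iff del: of_int_mult)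
  finally show "\<bar>w\<bar> / 2 \<le> sqrt (k * q1)" .
qed

lemma simultaneous_approx_by_multiple:
  fixes w P x y :: real and q1 p1 p2 :: int
  assumes P: "1 \<le> P" "P ^ 3 \<le> w" and w: "2 \<le> w\<^sup>2" and q1: "1 \<le> q1"
    and dominant: "\<bar>q1 * y - p2\<bar> \<le> \<bar>q1 * x - p1\<bar>"
    and large: "4 * sqrt q1 / (w\<^sup>2 * P) < \<bar>q1 * x - p1\<bar>"
    and small: "\<bar>q1 * x - p1\<bar> < 2 / w\<^sup>2"
  shows "\<exists>(q::int) (a1::int) (a2::int). 1 \<le> q \<and> real_of_int q \<le> w ^ 4 \<and>
           \<bar>q * x - a1\<bar> \<le> 4 * sqrt q / (w\<^sup>2 * P) \<and> \<bar>q * y - a2\<bar> \<le> 4 * sqrt q / (w\<^sup>2 * P)"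
proof -
  define t where "t = \<bar>q1 * x - p1\<bar>"
  have Pw: "P \<le> w"
    using le_of_cube_le[OF P] .
  have wP: "1 \<le> w * P" "w * P \<le> w\<^sup>2"
    using mult_mono[of 1 w 1 P] mult_left_mono[OF Pw, of w] P(1) Pw
    by (simp_all add: power2_eq_square)
  have "0 \<le> 4 * sqrt q1 / (w\<^sup>2 * P)" "2 / w\<^sup>2 \<le> 1"
    using P(1) Pw q1 w by simp_all
  then have t: "0 < t" "t \<le> 1"
    using large small unfolding t_def by linarith+
  define M where "M = nat \<lceil>w * P\<rceil>"
  have M: "w * P \<le> M" "M \<le> 2 * (w * P)" "M > 0"
    using wP unfolding M_def by linarith+
  obtain k b1 b2 :: int
    where k: "1 / (2 * t) \<le> k" "k \<le> M / t + 1/2"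
      and err: "\<bar>k * (q1 * x - p1) - b1\<bar> \<le> t / 2" "\<bar>k * (q1 * y - p2) - b2\<bar> \<le> t / 2 + 1 / M"
    using multiple_close_to_lattice_point_abs[OF \<open>M > 0\<close>, of "q1 * x - p1" "q1 * y - p2"]
      t dominant unfolding t_def by blast
  define q where "q = k * q1"
  have "real_of_int q \<le> w ^ 4"
    using multiple_denominator_le[OF P q1 t(1) _ _ M(2) k(2)] large small
    unfolding q_def t_def by simp
  have "1 \<le> k" and sqrt_q: "w / 2 \<le> sqrt q"
    using sqrt_multiple_lower_bound[where w = w, OF t(1) _ k(1) q1] small Pw P(1)
    unfolding q_def t_def by simp_all
  then have "1 \<le> q"
    unfolding q_def using q1 mult_mono[of 1 k 1 q1] by simp
  define B where "B = 4 * sqrt q / (w\<^sup>2 * P)"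
  have "2 / (w * P) \<le> B"
    unfolding B_def using sqrt_q Pw P(1) by (simp add: field_simps power2_eq_square)
  have "1 / w\<^sup>2 \<le> 1 / (w * P)" "1 / M \<le> 1 / (w * P)"
    using wP M by (simp_all add: frac_le)
  moreover have "2 / w\<^sup>2 = 2 * (1 / w\<^sup>2)" "2 / (w * P) = 2 * (1 / (w * P))"
    by simp_all
  ultimately have "\<bar>k * (q1 * x - p1) - b1\<bar> \<le> B" "\<bar>k * (q1 * y - p2) - b2\<bar> \<le> B"
    using err t small \<open>2 / (w * P) \<le> B\<close> unfolding t_def[symmetric] by linarith+
  moreover have "q * x - of_int (k * p1 + b1) = k * (q1 * x - p1) - b1"
    "q * y - of_int (k * p2 + b2) = k * (q1 * y - p2) - b2"
    unfolding q_def by (simp_all add: algebra_simps)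
  ultimately have "\<bar>q * x - of_int (k * p1 + b1)\<bar> \<le> B" "\<bar>q * y - of_int (k * p2 + b2)\<bar> \<le> B"
    by simp_all
  with \<open>1 \<le> q\<close> \<open>real_of_int q \<le> w ^ 4\<close> show ?thesis
    unfolding B_def by blast
qed

lemma simultaneous_approx_sqrt_denominator':
  fixes w P x y :: real
  assumes P: "1 \<le> P" "P ^ 3 \<le> w" and w: "2 \<le> w\<^sup>2"
  shows "\<exists>(q::int) (a1::int) (a2::int). 1 \<le> q \<and> real_of_int q \<le> w ^ 4 \<and>
           \<bar>q * x - a1\<bar> \<le> 4 * sqrt q / (w\<^sup>2 * P) \<and> \<bar>q * y - a2\<bar> \<le> 4 * sqrt q / (w\<^sup>2 * P)"
proof -
  define N where "N = nat \<lfloor>w\<^sup>2\<rfloor>"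
  have "real N = of_int \<lfloor>w\<^sup>2\<rfloor>"
    using w unfolding N_def by simp
  then have N: "w\<^sup>2 / 2 < N" "N \<le> w\<^sup>2" "0 < w\<^sup>2"
    using w by linarith+
  then have "0 < real N"
    by linarith
  then have "N > 0"
    by simp
  have "1 / N < 2 / w\<^sup>2"
    using N by (simp add: field_simps)
  have "real N ^ 2 \<le> (w\<^sup>2)\<^sup>2"
    using N(2) by (intro power_mono) auto
  then have "real (N\<^sup>2) \<le> w ^ 4"
    by (simp add: power2_eq_square power4_eq_xxxx)
  obtain q1 :: int and p :: "nat \<Rightarrow> int" where q1: "0 < q1" "q1 \<le> int (N\<^sup>2)"
    and p: "\<And>i::nat. i < 2 \<Longrightarrow> \<bar>q1 * (if i = 0 then x else y) - p i\<bar> < 1 / N"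
    by (rule Dirichlet_approx_simult[OF \<open>N > 0\<close>, where n = 2 and \<theta> = "\<lambda>i. if i = 0 then x else y"]) auto
  have small: "\<bar>q1 * x - p 0\<bar> < 2 / w\<^sup>2" "\<bar>q1 * y - p 1\<bar> < 2 / w\<^sup>2"
    using p[of 0] p[of 1] \<open>1 / N < 2 / w\<^sup>2\<close> by simp_all
  have "1 \<le> q1"
    using q1(1) by simp
  have "real_of_int q1 \<le> real (N\<^sup>2)"
    using q1(2) by (metis of_int_le_iff of_int_of_nat_eq)
  with \<open>real (N\<^sup>2) \<le> w ^ 4\<close> have "real_of_int q1 \<le> w ^ 4"
    by linarith
  define B where "B = 4 * sqrt q1 / (w\<^sup>2 * P)"
  consider "\<bar>q1 * x - p 0\<bar> \<le> B \<and> \<bar>q1 * y - p 1\<bar> \<le> B"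
    | "\<bar>q1 * y - p 1\<bar> \<le> \<bar>q1 * x - p 0\<bar>" "B < \<bar>q1 * x - p 0\<bar>"
    | "\<bar>q1 * x - p 0\<bar> \<le> \<bar>q1 * y - p 1\<bar>" "B < \<bar>q1 * y - p 1\<bar>"
    by linarith
  then show ?thesis
  proof cases
    case 1
    with \<open>1 \<le> q1\<close> \<open>real_of_int q1 \<le> w ^ 4\<close> show ?thesis
      unfolding B_def by blast
  next
    case 2
    then show ?thesis
      using simultaneous_approx_by_multiple[OF P w \<open>1 \<le> q1\<close> _ _ small(1)] unfolding B_def by blast
  next
    case 3
    then show ?thesis
      using simultaneous_approx_by_multiple[OF P w \<open>1 \<le> q1\<close> _ _ small(2)] unfolding B_def by blast
  qed
qed

lemma abs_sub_divide_le_of_abs_mult_sub_le: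
  fixes q z a c :: real
  assumes "0 < q" "\<bar>q * z - a\<bar> \<le> c * sqrt q"
  shows "\<bar>z - a / q\<bar> \<le> c / q powr (1/2)"
proof -
  have "\<bar>z - a / q\<bar> = \<bar>q * z - a\<bar> / q"
    using assms(1) by (simp add: field_simps)
  also have "\<dots> \<le> c * sqrt q / q"
    using assms by (simp add: divide_right_mono)
  also have "\<dots> = c / q powr (1/2)"
    using assms(1) by (simp add: powr_half_sqrt field_simps)
  finally show ?thesis .
qed

lemma simultaneous_approx_sqrt_denominator:
  fixes \<gamma> x y :: real and Q :: int
  assumes \<gamma>: "0 < \<gamma>" "\<gamma> \<le> 1/12" and "4 \<le> Q"
  shows "\<exists>(q::int) (a1::int) (a2::int). 1 \<le> q \<and> q \<le> Q \<and>
           max \<bar>x - a1 / q\<bar> \<bar>y - a2 / q\<bar> \<le> 4 / (q powr (1/2) * Q powr (1/2 + \<gamma>))"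
proof -
  have Q: "4 \<le> real_of_int Q"
    using \<open>4 \<le> Q\<close> by simp
  define w where "w = Q powr (1/4)"
  define P where "P = Q powr \<gamma>"
  have w_powers: "w ^ 4 = Q" "w\<^sup>2 = sqrt Q"
    using Q by (simp_all add: w_def powr_power powr_half_sqrt)
  have "2 \<le> w\<^sup>2"
    using real_sqrt_le_mono[OF Q] by (simp add: w_powers)
  have "1 \<le> P"
    using Q \<gamma> unfolding P_def by (intro ge_one_powr_ge_zero) auto
  have "P ^ 3 = Q powr (3 * \<gamma>)"
    using Q by (simp add: P_def powr_power)
  also have "\<dots> \<le> w"
    unfolding w_def using Q \<gamma> by (intro powr_mono) auto
  finally obtain q a1 a2 :: int where q: "1 \<le> q" "real_of_int q \<le> w ^ 4"
    and err: "\<bar>q * x - a1\<bar> \<le> 4 * sqrt q / (w\<^sup>2 * P)" "\<bar>q * y - a2\<bar> \<le> 4 * sqrt q / (w\<^sup>2 * P)"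
    using simultaneous_approx_sqrt_denominator'[OF \<open>1 \<le> P\<close> _ \<open>2 \<le> w\<^sup>2\<close>, of x y] by blast
  have "q \<le> Q"
    using q(2) by (simp add: w_powers)
  define c where "c = 4 / Q powr (1/2 + \<gamma>)"
  have "Q powr (1/2 + \<gamma>) = w\<^sup>2 * P"
    using Q by (simp add: powr_add powr_half_sqrt w_powers P_def)
  then have "4 * sqrt q / (w\<^sup>2 * P) = c * sqrt q"
    unfolding c_def by simp
  then have "\<bar>x - a1 / q\<bar> \<le> c / q powr (1/2)" "\<bar>y - a2 / q\<bar> \<le> c / q powr (1/2)"
    using err q(1) by (auto intro: abs_sub_divide_le_of_abs_mult_sub_le)
  with q(1) \<open>q \<le> Q\<close> show ?thesis
    unfolding c_def by (auto simp: mult.commute)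
qed

theorem lemma2p5:
  shows "\<exists>C::real. \<forall>\<gamma>::real. 0 < \<gamma> \<and> \<gamma> < 1/15 \<longrightarrow>
    (\<exists>Q0::int. \<forall>\<zeta>1 \<zeta>2 :: real. \<forall>Q::int.
       \<zeta>1 \<in> {-1..1} \<and> \<zeta>2 \<in> {-1..1} \<and> Q \<ge> Q0 \<longrightarrow>
       (\<exists>q::int. \<exists>a1 a2 :: int. 1 \<le> q \<and> q \<le> Q \<and>
          max \<bar>\<zeta>1 - of_int a1 / of_int q\<bar> \<bar>\<zeta>2 - of_int a2 / of_int q\<bar>
            \<le> C / (real_of_int q powr (1/2) * real_of_int Q powr (1/2 + \<gamma>))))"
  by (rule exI[of _ 4], intro allI impI, rule exI[of _ 4], intro allI impI, elim conjE,
      rule simultaneous_approx_sqrt_denominator) auto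

end
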